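(* Assume (C1) the maximum likelihood estimator $\widehat{\theta}$ exists and is an interior point of $\Theta$, and (C2) the log-likelihood $\ell$ is strictly concave on $\Theta$. Let $\Theta_0\subseteq\Theta$ be nonempty and assume $F$ is continuous and strictly increasing. Then $$s(\Theta_0)=\sup_{\theta\in\Theta_0}\bigl(1-F(T_\theta)\bigr)=1-F(T_{\Theta_0}),$$ where $T_{\Theta_0}=2\bigl(\ell(\widehat{\theta})-\ell(\widehat{\theta}_0)\bigr)$ with $\widehat{\theta}_0=\arg\sup_{\theta\in\Theta_0}\ell(\theta)$ (i.e. $T_{\Theta_0}=2(\ell(\widehat{\theta})-\sup_{\theta\in\Theta_0}\ell(\theta))$).
   Context: Let $\Theta\subseteq\mathbb{R}^k$ be a parameter space of a parametric statistical model, $x$ the observed data, and $\ell(\theta)=\ell(\theta;x)$ the log-likelihood. Let $\widehat{\theta}=\arg\sup_{\theta\in\Theta}\ell(\theta)$ be the maximum likelihood estimator, and for $\theta\in\Theta$ put $T_\theta=2(\ell(\widehat{\theta})-\ell(\theta))\ge 0$. Let $F$ be a cumulative distribution function of a nonnegative random variable (in the paper, the (approximate) distribution of $T_{\theta_0}$ at the true parameter $\theta_0$, assumed not to depend on $\theta_0$). For $\alpha\in(0,1)$, let $F_\alpha$ be the $1-\alpha$ quantile of $F$, i.e. $F(F_\alpha)=1-\alpha$. The likelihood-based confidence region of level $\alpha$ is $\Lambda_\alpha=\{\theta\in\Theta: T_\theta\le F_\alpha\}$. For $\Theta_0\subseteq\Theta$, the $s$-value (evidence measure for $H_0:\theta\in\Theta_0$)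 is $$s(\Theta_0)=\max\{0,\ \sup\{\alpha\in(0,1):\ \Lambda_\alpha\cap\Theta_0\neq\varnothing\}\},$$ with the convention that the supremum of the empty set does not exceed $0$. *)

theory Defs
  imports "HOL-Probability.Probability"
begin

definition strictly_concave_on :: "'a::real_vector set \<Rightarrow> ('a \<Rightarrow> real) \<Rightarrow> bool" where
  "strictly_concave_on S f \<longleftrightarrow> convex S \<and>
     (\<forall>x\<in>S. \<forall>y\<in>S. x \<noteq> y \<longrightarrow>
        (\<forall>t::real. 0 < t \<and> t < 1 \<longrightarrow> (1 - t) * f x + t * f y < f ((1 - t) *\<^sub>R x + t *\<^sub>R y)))"

definition LR_stat :: "('a \<Rightarrow> real) \<Rightarrow> 'a \<Rightarrow> 'a \<Rightarrow> real" where
  "LR_stat l thetahat theta = 2 * (l thetahat - l theta)"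

definition upper_quantile :: "(real \<Rightarrow> real) \<Rightarrow> real \<Rightarrow> real" where
  "upper_quantile F alpha = (THE q. F q = 1 - alpha)"

definition conf_region :: "('a \<Rightarrow> real) \<Rightarrow> 'a set \<Rightarrow> 'a \<Rightarrow> (real \<Rightarrow> real) \<Rightarrow> real \<Rightarrow> 'a set" where
  "conf_region l Theta thetahat F alpha =
     {theta \<in> Theta. LR_stat l thetahat theta \<le> upper_quantile F alpha}"

text \<open>s-value; the supremum of the empty set is taken not to exceed 0.\<close>
definition s_value :: "('a \<Rightarrow> real) \<Rightarrow> 'a set \<Rightarrow> 'a \<Rightarrow> (real \<Rightarrow> real) \<Rightarrow> 'a set \<Rightarrow> real" where
  "s_value l Theta thetahat F Theta0 =
     (let A = {alpha. 0 < alpha \<and> alpha < 1 \<and> conf_region l Theta thetahat F alpha \<inter> Theta0 \<noteq> {}}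
      in if A = {} then 0 else max 0 (Sup A))"

end

theory Submission
  imports Defs
begin

(* Write g(theta) = 1 - F(T_theta).  Since F is continuous, strictly increasing
   on [0,oo), vanishes on (-oo,0) and tends to 1, the quantile F_alpha is the unique
   nonnegative solution of F q = 1 - alpha, and for T >= 0 we get
   T <= F_alpha  <->  alpha <= 1 - F T.  Hence Lambda_alpha meets Theta0 iff alpha <= g(theta)
   for some theta in Theta0, i.e. the set of admissible alpha is the union of the intervals
   (0, min(g theta, 1)), whose supremum is sup g over Theta0 because 0 < g <= 1.  This is the
   first equality.  The second follows since t |-> 1 - F(2 (l thetahat - t)) is a
   continuous nondecreasing function of t, so it commutes with the supremum of l over Theta0.
   The file first collects the facts about the cdf F, then the quantile characterisation,
   the supremum of the level sets, the commutation of sup with the transform, and finally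
   the theorem. *)

lemma (in real_distribution) cdf_eq_0_below_0:
  assumes nonneg: "AE y in M. 0 \<le> y" and x: "x < 0"
  shows "cdf M x = 0"
proof -
  have "AE y in M. y \<notin> {..x}" using nonneg by eventually_elim (use x in auto)
  then have "{..x} \<in> null_sets M" by (subst AE_iff_null_sets) auto
  then show ?thesis unfolding cdf_def by (simp add: measure_def null_setsD1)
qed

text \<open>If the cdf is strictly increasing on \<open>[0,\<infinity>)\<close>, it stays strictly below 1 there;
  this makes every value \<open>1 - F(T\<^sub>\<theta>)\<close> strictly positive.\<close>
lemma (in real_distribution) cdf_less_1:
  assumes strict: "strict_mono_on {0..} (cdf M)" and t: "0 \<le> t"
  shows "cdf M t < 1"
proof -
  have "cdf M t < cdf M (t + 1)" using strict_mono_onD[OF strict] t by auto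
  also have "\<dots> \<le> 1" by (rule cdf_bounded_prob)
  finally show ?thesis .
qed

lemma upper_quantile_solves:
  fixes F :: "real \<Rightarrow> real"
  assumes cont: "continuous_on UNIV F"
    and strict: "strict_mono_on {0..} F"
    and zero: "\<And>x. x < 0 \<Longrightarrow> F x = 0"
    and top: "(F \<longlongrightarrow> 1) at_top"
    and a: "0 < a" "a < 1"
  shows "0 \<le> upper_quantile F a \<and> F (upper_quantile F a) = 1 - a"
proof -
  have solution_nonneg: "0 \<le> q" if "F q = 1 - a" for q
    using zero[of q] a that by (cases "q < 0") auto
  have "\<forall>\<^sub>F x in at_top. F x > 1 - a" using top a by (intro order_tendstoD) auto
  then obtain b where b: "F b > 1 - a" by (meson eventually_at_top_linorder order_refl)
  have "0 \<le> b" using zero[of b] b a by (cases "b < 0") auto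
  moreover have "F (-1) = 0" by (simp add: zero)
  ultimately obtain q where q: "F q = 1 - a"
    using IVT'[of F "-1" "1 - a" b] b a continuous_on_subset[OF cont, of "{-1..b}"] by auto
  have unique: "q' = q" if "F q' = 1 - a" for q'
    using strict_mono_on_eqD[OF strict] that q solution_nonneg by auto
  have "upper_quantile F a = q"
    unfolding upper_quantile_def using q unique by (rule the_equality)
  then show ?thesis using q solution_nonneg by simp
qed

lemma le_upper_quantile_iff:
  fixes F :: "real \<Rightarrow> real"
  assumes cont: "continuous_on UNIV F"
    and strict: "strict_mono_on {0..} F"
    and zero: "\<And>x. x < 0 \<Longrightarrow> F x = 0"
    and top: "(F \<longlongrightarrow> 1) at_top"
    and a: "0 < a" "a < 1"
    and t: "0 \<le> t"
  shows "t \<le> upper_quantile F a \<longleftrightarrow> a \<le> 1 - F t"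
proof -
  note q = upper_quantile_solves[OF cont strict zero top a]
  have "t \<le> upper_quantile F a \<longleftrightarrow> F t \<le> F (upper_quantile F a)"
    using strict_mono_on_less_eq[OF strict, of t "upper_quantile F a"] t q by auto
  then show ?thesis using q by auto
qed

lemma Sup_level_set:
  fixes g :: "'a \<Rightarrow> real"
  assumes ne: "S \<noteq> {}"
    and pos: "\<And>x. x \<in> S \<Longrightarrow> 0 < g x"
    and le1: "\<And>x. x \<in> S \<Longrightarrow> g x \<le> 1"
  defines "A \<equiv> {a. 0 < a \<and> a < 1 \<and> (\<exists>x\<in>S. a \<le> g x)}"
  shows "A \<noteq> {} \<and> Sup A = (SUP x\<in>S. g x)"
proof -
  have below: "w \<in> A" if "x \<in> S" "0 < w" "w < g x" for x w
    using that le1[of x] unfolding A_def by force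
  have bdd_g: "bdd_above (g ` S)" using le1 by (intro bdd_aboveI2) auto
  have bdd_A: "bdd_above A" unfolding A_def by (rule bdd_aboveI[where M=1]) auto
  obtain x0 where x0: "x0 \<in> S" using ne by auto
  then have "g x0 / 2 \<in> A" using pos[of x0] by (intro below) auto
  then have A_ne: "A \<noteq> {}" by auto
  have "Sup A \<le> (SUP x\<in>S. g x)"
  proof (rule cSup_least[OF A_ne])
    fix a assume "a \<in> A"
    then obtain x where "x \<in> S" "a \<le> g x" unfolding A_def by auto
    then show "a \<le> (SUP x\<in>S. g x)" using bdd_g by (meson cSUP_upper order_trans)
  qed
  moreover have "(SUP x\<in>S. g x) \<le> Sup A"
  proof (rule cSUP_least[OF ne])
    fix x assume x: "x \<in> S"
    show "g x \<le> Sup A"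
      by (rule dense_le_bounded[OF pos[OF x]]) (use below x bdd_A cSup_upper in blast)
  qed
  ultimately show ?thesis using A_ne by simp
qed

lemma SUP_transform_commute:
  fixes F :: "real \<Rightarrow> real" and l :: "'a \<Rightarrow> real"
  assumes cont: "continuous_on UNIV F" and mono: "mono F"
    and ne: "S \<noteq> {}" and bdd: "bdd_above (l ` S)"
  shows "1 - F (2 * (c - (SUP x\<in>S. l x))) = (SUP x\<in>S. 1 - F (2 * (c - l x)))"
proof -
  define h where "h t = 1 - F (2 * (c - t))" for t
  have "mono h" unfolding h_def using mono by (intro monoI) (auto simp: mono_def)
  moreover have "continuous (at_left s) h" for s
  proof -
    have "continuous_on UNIV h" unfolding h_def
      by (intro continuous_intros continuous_on_compose2[OF cont]) auto
    then have "isCont h s" by (simp add: continuous_on_eq_continuous_within)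
    then show ?thesis by (rule continuous_within_subset) auto
  qed
  ultimately have "h (Sup (l ` S)) = (SUP s\<in>l ` S. h s)"
    by (rule continuous_at_Sup_mono) (use ne bdd in auto)
  then show ?thesis unfolding h_def image_image .
qed

theorem lemma3p2:
  fixes Theta Theta0 :: "(real ^ 'k) set"
    and l :: "real ^ 'k \<Rightarrow> real"
    and thetahat :: "real ^ 'k"
    and M :: "real measure"
    and F :: "real \<Rightarrow> real"
  assumes mle_in: "thetahat \<in> Theta"
    and mle_max: "\<forall>theta\<in>Theta. l theta \<le> l thetahat"
    and mle_interior: "thetahat \<in> interior Theta"
    and concave: "strictly_concave_on Theta l"
    and distr: "real_distribution M"
    and nonneg: "AE x in M. 0 \<le> x"
    and F_cdf: "F = cdf M"
    and F_cont: "continuous_on UNIV F"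
    and F_strict: "strict_mono_on {0..} F"
    and Theta0_sub: "Theta0 \<subseteq> Theta"
    and Theta0_ne: "Theta0 \<noteq> {}"
  shows "s_value l Theta thetahat F Theta0 = (SUP theta\<in>Theta0. 1 - F (LR_stat l thetahat theta))
       \<and> s_value l Theta thetahat F Theta0 = 1 - F (2 * (l thetahat - (SUP theta\<in>Theta0. l theta)))"
proof -
  interpret real_distribution M by (rule distr)
  define T where "T = LR_stat l thetahat"
  have T_nonneg: "0 \<le> T theta" if "theta \<in> Theta0" for theta
    using mle_max that Theta0_sub unfolding T_def LR_stat_def by auto
  have zero: "F x = 0" if "x < 0" for x
    unfolding F_cdf using cdf_eq_0_below_0[OF nonneg that] .
  have top: "(F \<longlongrightarrow> 1) at_top" unfolding F_cdf by (rule cdf_lim_at_top_prob)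
  have region: "conf_region l Theta thetahat F a \<inter> Theta0 \<noteq> {} \<longleftrightarrow>
      (\<exists>theta\<in>Theta0. a \<le> 1 - F (T theta))" if "0 < a" "a < 1" for a
    using le_upper_quantile_iff[OF F_cont F_strict zero top that T_nonneg] Theta0_sub
    unfolding conf_region_def T_def by blast
  have g_pos: "0 < 1 - F (T theta)" and g_le1: "1 - F (T theta) \<le> 1"
    if "theta \<in> Theta0" for theta
    using cdf_less_1[of "T theta"] cdf_nonneg[of "T theta"] F_strict T_nonneg[OF that]
    unfolding F_cdf by auto
  have levels: "{a. 0 < a \<and> a < 1 \<and> conf_region l Theta thetahat F a \<inter> Theta0 \<noteq> {}}
      = {a. 0 < a \<and> a < 1 \<and> (\<exists>theta\<in>Theta0. a \<le> 1 - F (T theta))}"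
    using region by blast
  obtain theta0 where theta0: "theta0 \<in> Theta0" using Theta0_ne by auto
  have "0 \<le> (SUP theta\<in>Theta0. 1 - F (T theta))"
    using g_pos[OF theta0] g_le1 theta0
    by (intro order_trans[OF _ cSUP_upper[of theta0]] bdd_aboveI2[where M=1]) auto
  then have first: "s_value l Theta thetahat F Theta0 = (SUP theta\<in>Theta0. 1 - F (T theta))"
    using Sup_level_set[where g="\<lambda>theta. 1 - F (T theta)", OF Theta0_ne g_pos g_le1]
    unfolding s_value_def Let_def levels by (auto simp: max_def)
  have "mono F" unfolding F_cdf by (intro monoI cdf_nondecreasing)
  moreover have "bdd_above (l ` Theta0)"
    using mle_max Theta0_sub by (intro bdd_aboveI2[where M="l thetahat"]) auto
  ultimately show ?thesis
    using first SUP_transform_commute[OF F_cont _ Theta0_ne] unfolding T_def LR_stat_def by simp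
qed

end
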